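(* Let $1\le m\le n$ and set $A_{i,m}=\prod_{j=m,\,j\ne i}^n\frac{tx_i-x_j}{x_i-x_j}$ for $m\le i\le n$. Then for every symmetric Laurent polynomial $f$ in $x_1,\dots,x_n$, $$\sum_{i=m}^n D_if=\sum_{i=m}^n A_{i,m}\,x_i^{-1}\bigl(f-\tau_if\bigr).$$
   Context: Let $n\ge1$, $q,t$ generic parameters; operators act on Laurent polynomials (or rational functions) in $x=(x_1,\dots,x_n)$ over $\mathbb{Q}(q,t)$. Let $s_i$ interchange $x_i,x_{i+1}$, $(\tau_if)(x)=f(x_1,\dots,qx_i,\dots,x_n)$, $T_i=t+\frac{tx_i-x_{i+1}}{x_i-x_{i+1}}(s_i-1)$ (invertible, $T_i^{-1}=t^{-1}-1+t^{-1}T_i$), $\omega=s_{n-1}\cdots s_1\tau_1$, $Y_i=t^{-n+i}T_i\cdots T_{n-1}\,\omega\,T_1^{-1}\cdots T_{i-1}^{-1}$, $T_{ij}^{-1}=T_i^{-1}\cdots T_{j-2}^{-1}T_{j-1}^{-1}T_{j-2}^{-1}\cdots T_i^{-1}$ for $i<j$, and $D_i=x_i^{-1}\bigl(1-t^{n-1}[1+(t^{-1}-1)\sum_{j=i+1}^n t^{j-i}T_{ij}^{-1}]Y_i\bigr)$, $1\le i\le n$. *)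

theory Defs
  imports "HOL-Combinatorics.Permutations"
begin

text \<open>Functions of x = (x_1,...,x_n) are modelled as maps from points
  (nat \<Rightarrow> 'a), only coordinates 1..n being relevant, to the field 'a
  (playing the role of the coefficient field Q(q,t)).\<close>

type_synonym 'a fn = "(nat \<Rightarrow> 'a) \<Rightarrow> 'a"

definition sop :: "nat \<Rightarrow> 'a fn \<Rightarrow> 'a fn" where
  "sop i f = (\<lambda>x. f (x(i := x (Suc i), Suc i := x i)))"

definition tauop :: "'a::field \<Rightarrow> nat \<Rightarrow> 'a fn \<Rightarrow> 'a fn" where
  "tauop q i f = (\<lambda>x. f (x(i := q * x i)))"

definition Top :: "'a::field \<Rightarrow> nat \<Rightarrow> 'a fn \<Rightarrow> 'a fn" where
  "Top t i f = (\<lambda>x. t * f x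
      + (t * x i - x (Suc i)) / (x i - x (Suc i)) * (sop i f x - f x))"

definition Tinv :: "'a::field \<Rightarrow> nat \<Rightarrow> 'a fn \<Rightarrow> 'a fn" where
  "Tinv t i f = (\<lambda>x. (inverse t - 1) * f x + inverse t * Top t i f x)"

definition compose :: "('b \<Rightarrow> 'b) list \<Rightarrow> 'b \<Rightarrow> 'b" where
  "compose ops = foldr (\<circ>) ops id"

definition omega :: "nat \<Rightarrow> 'a::field \<Rightarrow> 'a fn \<Rightarrow> 'a fn" where
  "omega n q = compose (map sop (rev [1..<n]) @ [tauop q 1])"

definition Yop :: "nat \<Rightarrow> 'a::field \<Rightarrow> 'a \<Rightarrow> nat \<Rightarrow> 'a fn \<Rightarrow> 'a fn" where
  "Yop n q t i f = (\<lambda>x. t powi (int i - int n) *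
     compose (map (Top t) [i..<n] @ [omega n q] @ map (Tinv t) [1..<i]) f x)"

definition Tijinv :: "'a::field \<Rightarrow> nat \<Rightarrow> nat \<Rightarrow> 'a fn \<Rightarrow> 'a fn" where
  "Tijinv t i j = compose (map (Tinv t) [i..<j - 1] @ [Tinv t (j - 1)]
                           @ map (Tinv t) (rev [i..<j - 1]))"

definition Dop :: "nat \<Rightarrow> 'a::field \<Rightarrow> 'a \<Rightarrow> nat \<Rightarrow> 'a fn \<Rightarrow> 'a fn" where
  "Dop n q t i f = (\<lambda>x. inverse (x i) *
     (f x - t ^ (n - 1) *
        (Yop n q t i f x + (inverse t - 1) *
           (\<Sum>j = Suc i..n. t ^ (j - i) * Tijinv t i j (Yop n q t i f) x))))"

definition laurent_poly :: "nat \<Rightarrow> 'a::field fn \<Rightarrow> bool" where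
  "laurent_poly n f \<longleftrightarrow> (\<exists>(S :: (nat \<Rightarrow> int) set) c. finite S \<and>
      (\<forall>\<alpha>\<in>S. \<forall>i. i \<notin> {1..n} \<longrightarrow> \<alpha> i = 0) \<and>
      (\<forall>x. f x = (\<Sum>\<alpha>\<in>S. c \<alpha> * (\<Prod>i\<in>{1..n}. x i powi \<alpha> i))))"

definition symmetric_fn :: "nat \<Rightarrow> 'a fn \<Rightarrow> bool" where
  "symmetric_fn n f \<longleftrightarrow> (\<forall>\<sigma> x. \<sigma> permutes {1..n} \<longrightarrow> f (x \<circ> \<sigma>) = f x)"

definition Acoef :: "nat \<Rightarrow> 'a::field \<Rightarrow> nat \<Rightarrow> nat \<Rightarrow> (nat \<Rightarrow> 'a) \<Rightarrow> 'a" where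
  "Acoef n t i m x = (\<Prod>j\<in>{m..n} - {i}. (t * x i - x j) / (x i - x j))"

text \<open>generic point: no denominator occurring anywhere can vanish\<close>
definition generic_point :: "nat \<Rightarrow> 'a::field \<Rightarrow> (nat \<Rightarrow> 'a) \<Rightarrow> bool" where
  "generic_point n q x \<longleftrightarrow> (\<forall>i\<in>{1..n}. x i \<noteq> 0) \<and>
     (\<forall>i\<in>{1..n}. \<forall>j\<in>{1..n}. i \<noteq> j \<longrightarrow> (\<forall>k::int. x i \<noteq> q powi k * x j))"

end

theory Submission
  imports Defs
begin

text \<open>
  For symmetric \<open>f\<close> each \<open>T\<^sub>l\<^sup>-\<^sup>1\<close> acts on \<open>f\<close> as \<open>t\<^sup>-\<^sup>1\<close> and \<open>\<omega>\<close> acts as \<open>\<tau>\<^sub>n\<close>, so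
  \<open>Y\<^sub>i f = t\<^sup>1\<^sup>-\<^sup>n h\<^sub>i\<close> with \<open>h\<^sub>j = T\<^sub>j \<cdots> T\<^sub>n\<^sub>-\<^sub>1 \<tau>\<^sub>n f\<close>. As \<open>h\<^sub>j = T\<^sub>j h\<^sub>j\<^sub>+\<^sub>1\<close> and \<open>h\<^sub>j\<close> is
  \<open>s\<^sub>l\<close>-invariant for \<open>l + 1 < j\<close>, the right half of \<open>T\<^sub>i\<^sub>j\<^sup>-\<^sup>1\<close> carries \<open>h\<^sub>i\<close> to \<open>h\<^sub>j\<close> and
  the left half multiplies by \<open>t\<^sup>i\<^sup>+\<^sup>1\<^sup>-\<^sup>j\<close>; hence
  \<open>D\<^sub>i f = x\<^sub>i\<^sup>-\<^sup>1 (f - h\<^sub>i - (1 - t) \<Sum>\<^sub>j\<^sub>>\<^sub>i h\<^sub>j)\<close>.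
  Since \<open>T\<^sub>l\<close> only recombines the functions \<open>\<tau>\<^sub>k f\<close>, downward induction on \<open>j\<close> gives
  \<open>h\<^sub>j = \<Sum>\<^sub>k H\<^sub>j\<^sub>k \<tau>\<^sub>k f\<close> with explicit rational \<open>H\<^sub>j\<^sub>k\<close>, and so
  \<open>D\<^sub>i f = x\<^sub>i\<^sup>-\<^sup>1 \<Sum>\<^sub>k E\<^sub>i\<^sub>k (f - \<tau>\<^sub>k f)\<close>, where \<open>\<Sum>\<^sub>k E\<^sub>i\<^sub>k = 1\<close> is read off from \<open>f = 1\<close>.
  Finally \<open>\<Sum>\<^sub>i\<^sub>=\<^sub>m\<^sup>n x\<^sub>i\<^sup>-\<^sup>1 E\<^sub>i\<^sub>k\<close> telescopes to \<open>x\<^sub>k\<^sup>-\<^sup>1 A\<^sub>k\<^sub>,\<^sub>m\<close>.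

  The argument is pointwise and only needs the coordinates of \<open>x\<close> to be nonzero and
  pairwise distinct.
\<close>

section \<open>Transposing coordinates; symmetric functions\<close>

definition swap_coords :: "nat \<Rightarrow> (nat \<Rightarrow> 'a) \<Rightarrow> nat \<Rightarrow> 'a" where
  "swap_coords i y = y \<circ> Transposition.transpose i (Suc i)"

lemma swap_coords_apply [simp]:
  "swap_coords i y i = y (Suc i)"
  "swap_coords i y (Suc i) = y i"
  "k \<noteq> i \<Longrightarrow> k \<noteq> Suc i \<Longrightarrow> swap_coords i y k = y k"
  by (simp_all add: swap_coords_def)

lemma swap_coords_swap_coords [simp]: "swap_coords i (swap_coords i y) = y"
  by (simp add: swap_coords_def comp_assoc)

lemma swap_coords_commute:
  "Suc l < j \<or> Suc j < l \<Longrightarrow> swap_coords j (swap_coords l y) = swap_coords l (swap_coords j y)"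
  by (auto simp: swap_coords_def fun_eq_iff Transposition.transpose_def)

lemma transpose_Suc_permutes: "1 \<le> i \<Longrightarrow> i < n \<Longrightarrow> Transposition.transpose i (Suc i) permutes {1..n}"
  by (rule permutes_swap_id) auto

lemma inj_on_swap_coords:
  assumes "1 \<le> i" "i < n" "inj_on y {1..n}"
  shows "inj_on (swap_coords i y) {1..n}"
proof -
  have "Transposition.transpose i (Suc i) permutes {1..n}"
    using assms(1,2) by (rule transpose_Suc_permutes)
  then show ?thesis
    unfolding swap_coords_def using assms(3)
    by (simp add: comp_inj_on permutes_image permutes_inj_on)
qed

lemma sop_apply: "sop i f y = f (swap_coords i y)"
proof -
  have "y(i := y (Suc i), Suc i := y i) = swap_coords i y"
    by (auto simp: swap_coords_def fun_eq_iff Transposition.transpose_def)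
  then show ?thesis by (simp add: sop_def)
qed

lemma Top_apply: "Top t i f y = t * f y
    + (t * y i - y (Suc i)) / (y i - y (Suc i)) * (f (swap_coords i y) - f y)"
  by (simp add: Top_def sop_apply)

lemma symmetric_fn_swap_coords:
  "symmetric_fn n f \<Longrightarrow> 1 \<le> i \<Longrightarrow> i < n \<Longrightarrow> f (swap_coords i y) = f y"
  unfolding symmetric_fn_def swap_coords_def by (metis transpose_Suc_permutes)

lemma symmetric_fn_sop: "symmetric_fn n f \<Longrightarrow> 1 \<le> i \<Longrightarrow> i < n \<Longrightarrow> sop i f = f"
  by (simp add: fun_eq_iff sop_apply symmetric_fn_swap_coords)

lemma tauop_symmetric_fn_swap_coords:
  assumes "symmetric_fn n f" "1 \<le> i" "i < n"
  shows "tauop q k f (swap_coords i y) = tauop q (Transposition.transpose i (Suc i) k) f y"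
proof -
  let ?s = "Transposition.transpose i (Suc i)"
  have "(swap_coords i y)(k := q * swap_coords i y k) = swap_coords i (y(?s k := q * y (?s k)))"
    by (auto simp: swap_coords_def fun_eq_iff transpose_eq_iff)
  then show ?thesis
    using symmetric_fn_swap_coords[OF assms] by (simp add: tauop_def)
qed

lemma compose_Nil [simp]: "compose [] = id"
  by (simp add: compose_def)

lemma compose_Cons [simp]: "compose (A # L) g = A (compose L g)"
  by (simp add: compose_def)

lemma compose_append [simp]: "compose (L1 @ L2) g = compose L1 (compose L2 g)"
  by (induction L1) simp_all

lemma omega_symmetric_fn:
  assumes "symmetric_fn n f" "1 \<le> n"
  shows "omega n q f = tauop q n f"
proof -
  have "compose (map sop (rev [1..<m]) @ [tauop q 1]) f = tauop q m f" if "1 \<le> m" "m \<le> n" for m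
    using that
  proof (induction m rule: dec_induct)
    case (step k)
    have "compose (map sop (rev [1..<Suc k]) @ [tauop q 1]) f = sop k (tauop q k f)"
      using step by simp
    also have "\<dots> = tauop q (Suc k) f"
      using tauop_symmetric_fn_swap_coords[OF assms(1), of k q k] step
      by (simp add: fun_eq_iff sop_apply)
    finally show ?case .
  qed simp
  then show ?thesis
    using assms(2) by (simp add: omega_def)
qed

section \<open>Demazure-Lusztig operators\<close>

lemma compose_scale:
  assumes "\<And>A h. A \<in> set L \<Longrightarrow> A (\<lambda>y. c * h y) = (\<lambda>y. c * A h y)"
  shows "compose L (\<lambda>y. c * g y) = (\<lambda>y. c * compose L g y)"
  using assms by (induction L) simp_all

lemma Top_scale: "Top t i (\<lambda>y. c * g y) = (\<lambda>y. c * Top t i g y)"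
  by (simp add: Top_apply fun_eq_iff algebra_simps)

lemma Tinv_scale: "Tinv t i (\<lambda>y. c * g y) = (\<lambda>y. c * Tinv t i g y)"
  by (simp add: Tinv_def Top_scale fun_eq_iff algebra_simps)

lemma compose_Top_scale:
  "compose (map (Top t) L) (\<lambda>y. c * g y) = (\<lambda>y. c * compose (map (Top t) L) g y)"
  by (rule compose_scale) (auto simp: Top_scale)

lemma Tijinv_scale: "Tijinv t i j (\<lambda>y. c * g y) = (\<lambda>y. c * Tijinv t i j g y)"
proof -
  have "Tijinv t i j = compose (map (Tinv t) ([i..<j - 1] @ [j - 1] @ rev [i..<j - 1]))"
    by (simp add: Tijinv_def)
  then show ?thesis
    by (simp only:) (rule compose_scale, auto simp: Tinv_scale)
qed

lemma Top_sop_fixed: "sop i g = g \<Longrightarrow> Top t i g = (\<lambda>y. t * g y)"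
  by (simp add: Top_def fun_eq_iff)

lemma Tinv_sop_fixed: "t \<noteq> 0 \<Longrightarrow> sop i g = g \<Longrightarrow> Tinv t i g = (\<lambda>y. inverse t * g y)"
  by (simp add: Tinv_def Top_sop_fixed fun_eq_iff field_simps)

lemma compose_Tinv_sop_fixed:
  assumes "t \<noteq> 0" "\<forall>l\<in>set L. sop l g = g"
  shows "compose (map (Tinv t) L) g = (\<lambda>y. inverse t ^ length L * g y)"
  using assms(2)
proof (induction L)
  case (Cons l L)
  then show ?case
    using assms(1) by (simp add: Tinv_scale Tinv_sop_fixed mult.assoc mult.left_commute)
qed simp

lemma compose_Top_const:
  "compose (map (Top t) L) (\<lambda>_. c) = (\<lambda>_. t ^ length L * c)"
proof (induction L arbitrary: c)
  case (Cons l L)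
  have "Top t l (\<lambda>_. t ^ length L * c) = (\<lambda>_. t * (t ^ length L * c))"
    by (rule Top_sop_fixed) (simp add: sop_def)
  then show ?case
    using Cons by (simp add: mult.assoc)
qed simp

lemma sop_Top_commute:
  assumes "Suc l < j \<or> Suc j < l"
  shows "sop l (Top t j g) = Top t j (sop l g)"
proof
  fix y :: "nat \<Rightarrow> 'a"
  have "swap_coords l y j = y j" "swap_coords l y (Suc j) = y (Suc j)"
    using assms by auto
  then show "sop l (Top t j g) y = Top t j (sop l g) y"
    by (simp add: sop_apply Top_apply swap_coords_commute[OF assms])
qed

lemma Tinv_Top:
  assumes "t \<noteq> 0" "y i \<noteq> y (Suc i)"
  shows "Tinv t i (Top t i g) y = g y"
proof -
  define c where "c = (t * y i - y (Suc i)) / (y i - y (Suc i))"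
  have c_swap: "(t * y (Suc i) - y i) / (y (Suc i) - y i) = t + 1 - c"
    using assms(2) by (simp add: c_def field_simps)
  have "Tinv t i (Top t i g) y
      = (inverse t - 1) * (t * g y + c * (g (swap_coords i y) - g y))
        + inverse t * (t * (t * g y + c * (g (swap_coords i y) - g y))
        + c * ((t * g (swap_coords i y) + (t + 1 - c) * (g y - g (swap_coords i y)))
               - (t * g y + c * (g (swap_coords i y) - g y))))"
    by (simp only: Tinv_def Top_apply swap_coords_apply swap_coords_swap_coords c_swap
        flip: c_def)
  also have "\<dots> = g y"
    using assms(1) by (simp add: field_simps)
  finally show ?thesis .
qed

text \<open>\<open>Top t i\<close> divides by \<open>y i - y (Suc i)\<close>, so \<open>T\<^sub>i\<^sup>-\<^sup>1 T\<^sub>i = 1\<close> only holds off the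
  hyperplane \<open>y i = y (Suc i)\<close> (see \<open>Tinv_Top\<close>). Operator identities are therefore
  established on points with pairwise distinct coordinates.\<close>

definition agree_off_diag :: "nat \<Rightarrow> 'a fn \<Rightarrow> 'a fn \<Rightarrow> bool" where
  "agree_off_diag n g h \<longleftrightarrow> (\<forall>y. inj_on y {1..n} \<longrightarrow> g y = h y)"

lemma agree_off_diag_refl [simp]: "agree_off_diag n g g"
  by (simp add: agree_off_diag_def)

lemma agree_off_diag_trans [trans]:
  "agree_off_diag n g h \<Longrightarrow> agree_off_diag n h k \<Longrightarrow> agree_off_diag n g k"
  by (simp add: agree_off_diag_def)

lemma agree_off_diag_trans_eq [trans]:
  "agree_off_diag n g h \<Longrightarrow> h = k \<Longrightarrow> agree_off_diag n g k"
  "g = h \<Longrightarrow> agree_off_diag n h k \<Longrightarrow> agree_off_diag n g k"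
  by simp_all

lemma Top_agree_off_diag:
  assumes "1 \<le> i" "i < n" "agree_off_diag n g h"
  shows "agree_off_diag n (Top t i g) (Top t i h)"
  unfolding agree_off_diag_def
proof (intro allI impI)
  fix y :: "nat \<Rightarrow> 'a"
  assume "inj_on y {1..n}"
  moreover from this have "inj_on (swap_coords i y) {1..n}"
    using assms(1,2) by (rule inj_on_swap_coords[rotated -1])
  ultimately show "Top t i g y = Top t i h y"
    using assms(3) by (simp add: agree_off_diag_def Top_apply)
qed

lemma Tinv_agree_off_diag:
  assumes "1 \<le> i" "i < n" "agree_off_diag n g h"
  shows "agree_off_diag n (Tinv t i g) (Tinv t i h)"
  using Top_agree_off_diag[OF assms] assms(3) by (simp add: agree_off_diag_def Tinv_def)

lemma compose_Tinv_agree_off_diag: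
  assumes "\<forall>l\<in>set L. 1 \<le> l \<and> l < n" "agree_off_diag n g h"
  shows "agree_off_diag n (compose (map (Tinv t) L) g) (compose (map (Tinv t) L) h)"
  using assms(1) by (induction L) (simp_all add: assms(2) Tinv_agree_off_diag)

section \<open>Reduction to the chain \<open>T\<^sub>j \<cdots> T\<^sub>n\<^sub>-\<^sub>1 \<tau>\<^sub>n f\<close>\<close>

definition Tchain :: "nat \<Rightarrow> 'a::field \<Rightarrow> 'a \<Rightarrow> 'a fn \<Rightarrow> nat \<Rightarrow> 'a fn" where
  "Tchain n q t f j = compose (map (Top t) [j..<n]) (tauop q n f)"

lemma Tchain_last [simp]: "Tchain n q t f n = tauop q n f"
  by (simp add: Tchain_def)

lemma Tchain_step: "j < n \<Longrightarrow> Tchain n q t f j = Top t j (Tchain n q t f (Suc j))"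
  by (simp add: Tchain_def upt_conv_Cons)

lemma power_int_diff_inverse:
  fixes t :: "'a::field"
  assumes "t \<noteq> 0" "1 \<le> i" "i \<le> n"
  shows "t powi (int i - int n) * inverse t ^ (i - 1) = inverse t ^ (n - 1)"
proof -
  have "t powi (int i - int n) = inverse t ^ (n - i)"
    using assms(3) by (simp add: power_int_def nat_diff_distrib)
  moreover have "n - i + (i - 1) = n - 1"
    using assms(2,3) by simp
  ultimately show ?thesis
    by (metis power_add)
qed

lemma Yop_symmetric_fn:
  assumes "symmetric_fn n f" "t \<noteq> 0" "1 \<le> i" "i \<le> n"
  shows "Yop n q t i f = (\<lambda>y. inverse t ^ (n - 1) * Tchain n q t f i y)"
proof -
  have "compose (map (Tinv t) [1..<i]) f = (\<lambda>y. inverse t ^ (i - 1) * f y)"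
    using compose_Tinv_sop_fixed[OF assms(2)] symmetric_fn_sop[OF assms(1)] assms(4) by simp
  moreover have "omega n q (\<lambda>y. c * f y) = (\<lambda>y. c * tauop q n f y)" for c
    using omega_symmetric_fn[of n "\<lambda>y. c * f y"] assms(1,3,4)
    by (simp add: symmetric_fn_def tauop_def)
  ultimately show ?thesis
    using power_int_diff_inverse[OF assms(2-4)]
    by (simp add: Yop_def Tchain_def compose_Top_scale mult.assoc[symmetric])
qed

lemma sop_Tchain:
  assumes "symmetric_fn n f" "1 \<le> l" "Suc l < j" "j \<le> n"
  shows "sop l (Tchain n q t f j) = Tchain n q t f j"
  using assms(4,3)
proof (induction j rule: inc_induct)
  case base
  then show ?case
    using tauop_symmetric_fn_swap_coords[OF assms(1,2), of q n]
    by (simp add: fun_eq_iff sop_apply)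
next
  case (step j)
  then show ?case
    by (simp add: Tchain_step sop_Top_commute)
qed

lemma Tinv_Tchain:
  assumes "t \<noteq> 0" "1 \<le> i" "i \<le> l" "l \<le> n"
  shows "agree_off_diag n (compose (map (Tinv t) (rev [i..<l])) (Tchain n q t f i))
                          (Tchain n q t f l)"
  using assms(3,4)
proof (induction l rule: dec_induct)
  case base
  then show ?case by simp
next
  case (step k)
  have "compose (map (Tinv t) (rev [i..<Suc k])) (Tchain n q t f i)
      = Tinv t k (compose (map (Tinv t) (rev [i..<k])) (Tchain n q t f i))"
    using step.hyps by simp
  also have "agree_off_diag n \<dots> (Tinv t k (Tchain n q t f k))"
    using step.hyps step.prems assms(2) by (intro Tinv_agree_off_diag step.IH) simp_all
  also have "Tinv t k (Tchain n q t f k) = Tinv t k (Top t k (Tchain n q t f (Suc k)))"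
    using step.prems by (simp add: Tchain_step)
  also have "agree_off_diag n \<dots> (Tchain n q t f (Suc k))"
    unfolding agree_off_diag_def
  proof (intro allI impI)
    fix y :: "nat \<Rightarrow> 'a"
    assume "inj_on y {1..n}"
    then have "y k \<noteq> y (Suc k)"
      by (rule inj_on_contraD) (use step.hyps step.prems assms(2) in auto)
    then show "Tinv t k (Top t k (Tchain n q t f (Suc k))) y = Tchain n q t f (Suc k) y"
      by (rule Tinv_Top[OF assms(1)])
  qed
  finally show ?case .
qed

lemma Tijinv_Tchain:
  assumes "symmetric_fn n f" "t \<noteq> 0" "1 \<le> i" "i < j" "j \<le> n"
  shows "agree_off_diag n (Tijinv t i j (Tchain n q t f i))
                          (\<lambda>y. inverse t ^ (j - 1 - i) * Tchain n q t f j y)"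
proof -
  have "Tijinv t i j (Tchain n q t f i) = compose (map (Tinv t) [i..<j - 1])
          (compose (map (Tinv t) (rev [i..<j])) (Tchain n q t f i))"
    using assms(4) by (cases j) (simp_all add: Tijinv_def)
  also have "agree_off_diag n \<dots> (compose (map (Tinv t) [i..<j - 1]) (Tchain n q t f j))"
    using assms Tinv_Tchain[OF assms(2,3)]
    by (intro compose_Tinv_agree_off_diag) auto
  also have "compose (map (Tinv t) [i..<j - 1]) (Tchain n q t f j)
      = (\<lambda>y. inverse t ^ length [i..<j - 1] * Tchain n q t f j y)"
  proof (rule compose_Tinv_sop_fixed[OF assms(2)], intro ballI)
    fix l
    assume "l \<in> set [i..<j - 1]"
    then show "sop l (Tchain n q t f j) = Tchain n q t f j"
      using assms by (intro sop_Tchain) auto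
  qed
  finally show ?thesis
    by simp
qed

lemma Dop_Tchain:
  assumes "symmetric_fn n f" "t \<noteq> 0" "1 \<le> i" "i \<le> n" "inj_on y {1..n}"
  shows "Dop n q t i f y = inverse (y i) *
    (f y - (Tchain n q t f i y + (1 - t) * (\<Sum>j = Suc i..n. Tchain n q t f j y)))"
proof -
  let ?c = "inverse t ^ (n - 1)"
  have Y: "Yop n q t i f = (\<lambda>y. ?c * Tchain n q t f i y)"
    by (rule Yop_symmetric_fn[OF assms(1-4)])
  have "t ^ (j - i) * Tijinv t i j (Yop n q t i f) y = ?c * t * Tchain n q t f j y"
    if "j \<in> {Suc i..n}" for j
  proof -
    have "Tijinv t i j (Yop n q t i f) y = ?c * (inverse t ^ (j - 1 - i) * Tchain n q t f j y)"
      using Tijinv_Tchain[OF assms(1-3), of j q] that assms(5)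
      by (simp add: Y Tijinv_scale agree_off_diag_def)
    moreover have "t ^ (j - i) = t * t ^ (j - 1 - i)"
      using that by (simp flip: power_Suc add: Suc_diff_Suc)
    ultimately show ?thesis
      using assms(2) by (simp add: power_inverse field_simps)
  qed
  then have sum_Tijinv: "(\<Sum>j = Suc i..n. t ^ (j - i) * Tijinv t i j (Yop n q t i f) y)
      = ?c * t * (\<Sum>j = Suc i..n. Tchain n q t f j y)"
    by (simp add: sum_distrib_left)
  have "t ^ (n - 1) * (?c * a + (inverse t - 1) * (?c * t * b))
      = (t * inverse t) ^ (n - 1) * (a + (inverse t * t - t) * b)" for a b
    by (simp add: power_mult_distrib algebra_simps)
  also have "\<dots> a b = a + (1 - t) * b" for a b
    using assms(2) by simp
  finally have bracket: "t ^ (n - 1) * (?c * a + (inverse t - 1) * (?c * t * b)) = a + (1 - t) * b"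
    for a b .
  show ?thesis
    unfolding Dop_def sum_Tijinv unfolding Y bracket ..
qed

section \<open>Expansion in the functions \<open>\<tau>\<^sub>k f\<close>\<close>

definition tau_comb :: "nat \<Rightarrow> 'a::field \<Rightarrow> 'a fn \<Rightarrow> (nat \<Rightarrow> 'a fn) \<Rightarrow> 'a fn" where
  "tau_comb n q f C y = (\<Sum>k\<in>{1..n}. C k y * tauop q k f y)"

definition Top_coeff :: "'a::field \<Rightarrow> nat \<Rightarrow> (nat \<Rightarrow> 'a fn) \<Rightarrow> nat \<Rightarrow> 'a fn" where
  "Top_coeff t i C k y = t * C k y + (t * y i - y (Suc i)) / (y i - y (Suc i)) *
      (C (Transposition.transpose i (Suc i) k) (swap_coords i y) - C k y)"

text \<open>For symmetric \<open>f\<close>, \<open>s\<^sub>i\<close> permutes the functions \<open>\<tau>\<^sub>k f\<close>, so \<open>T\<^sub>i\<close> acts on their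
  linear combinations through the coefficients alone.\<close>

lemma Top_tau_comb:
  assumes "symmetric_fn n f" "1 \<le> i" "i < n"
  shows "Top t i (tau_comb n q f C) = tau_comb n q f (Top_coeff t i C)"
proof
  fix y :: "nat \<Rightarrow> 'a"
  let ?s = "Transposition.transpose i (Suc i)"
  define c where "c = (t * y i - y (Suc i)) / (y i - y (Suc i))"
  have "tau_comb n q f C (swap_coords i y) = (\<Sum>k\<in>{1..n}. C k (swap_coords i y) * tauop q (?s k) f y)"
    by (simp add: tau_comb_def tauop_symmetric_fn_swap_coords[OF assms])
  also have "\<dots> = (\<Sum>k\<in>{1..n}. C (?s k) (swap_coords i y) * tauop q k f y)"
    using transpose_Suc_permutes[OF assms(2,3)]
    by (subst sum.permutes_inv[where p = ?s, symmetric]) (simp_all add: permutes_inv_eq)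
  finally show "Top t i (tau_comb n q f C) y = tau_comb n q f (Top_coeff t i C) y"
    by (simp add: Top_apply tau_comb_def Top_coeff_def c_def[symmetric] algebra_simps
        sum.distrib sum_subtractf sum_distrib_left)
qed

lemma Acoef_insert:
  "a \<le> n \<Longrightarrow> a \<noteq> k \<Longrightarrow> Acoef n t k a y = (t * y k - y a) / (y k - y a) * Acoef n t k (Suc a) y"
proof -
  assume "a \<le> n" "a \<noteq> k"
  then have "{a..n} - {k} = insert a ({Suc a..n} - {k})"
    by auto
  then show ?thesis
    by (simp add: Acoef_def)
qed

lemma Acoef_self: "Acoef n t k k y = Acoef n t k (Suc k) y"
proof -
  have "{k..n} - {k} = {Suc k..n} - {k}"
    by auto
  then show ?thesis
    by (simp add: Acoef_def)
qed

lemma Acoef_swap_coords: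
  assumes "Suc j < a"
  shows "Acoef n t (Transposition.transpose j (Suc j) k) a (swap_coords j y) = Acoef n t k a y"
proof -
  let ?s = "Transposition.transpose j (Suc j)"
  have "{a..n} - {?s k} = {a..n} - {k}"
    using assms by (auto simp: Transposition.transpose_def)
  moreover have "swap_coords j y (?s k) = y k"
    by (simp add: swap_coords_def)
  ultimately show ?thesis
    unfolding Acoef_def using assms by (intro prod.cong) auto
qed

definition chain_coeff :: "nat \<Rightarrow> 'a::field \<Rightarrow> nat \<Rightarrow> nat \<Rightarrow> (nat \<Rightarrow> 'a) \<Rightarrow> 'a" where
  "chain_coeff n t j k y =
    (if k = j then Acoef n t j (Suc j) y
     else if j < k \<and> k \<le> n then (t - 1) * y k / (y k - y j) * Acoef n t k (Suc j) y
     else 0)"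

lemma Top_coeff_chain_coeff:
  assumes "1 \<le> j" "j < n" "inj_on y {1..n}" "k \<in> {1..n}"
  shows "Top_coeff t j (chain_coeff n t (Suc j)) k y = chain_coeff n t j k y"
proof -
  have y_ne: "y a \<noteq> y b" if "a \<in> {1..n}" "b \<in> {1..n}" "a \<noteq> b" for a b
    using assms(3) that by (auto dest: inj_onD)
  have y_j: "y j \<noteq> y (Suc j)"
    using assms(1,2) by (intro y_ne) auto
  consider "k < j" | "k = j" | "k = Suc j" | "Suc j < k"
    by linarith
  then show ?thesis
  proof cases
    case 1
    then show ?thesis
      by (simp add: Top_coeff_def chain_coeff_def)
  next
    case 2
    then show ?thesis
      using Acoef_swap_coords[of j "Suc (Suc j)" n t j y] assms(2)
      by (simp add: Top_coeff_def chain_coeff_def Acoef_insert)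
  next
    case 3
    then show ?thesis
      using Acoef_swap_coords[of j "Suc (Suc j)" n t k y] y_j assms(2)
      by (simp add: Top_coeff_def chain_coeff_def Acoef_self field_simps)
  next
    case 4
    define Z where "Z = Acoef n t k (Suc (Suc j)) y"
    have k_ne: "y k \<noteq> y j" "y k \<noteq> y (Suc j)"
      using assms(1,4) 4 by (intro y_ne; simp)+
    have "Top_coeff t j (chain_coeff n t (Suc j)) k y
      = t * ((t - 1) * y k / (y k - y (Suc j)) * Z) + (t * y j - y (Suc j)) / (y j - y (Suc j))
          * ((t - 1) * y k / (y k - y j) * Z - (t - 1) * y k / (y k - y (Suc j)) * Z)"
      using 4 assms(4) Acoef_swap_coords[of j "Suc (Suc j)" n t k y]
      by (simp add: Top_coeff_def chain_coeff_def Z_def)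
    also have "\<dots> = (t - 1) * y k / (y k - y j) * ((t * y k - y (Suc j)) / (y k - y (Suc j)) * Z)"
      using y_j k_ne by (simp add: divide_simps) (simp add: algebra_simps)
    also have "\<dots> = chain_coeff n t j k y"
      using 4 assms(4) by (simp add: chain_coeff_def Z_def Acoef_insert)
    finally show ?thesis .
  qed
qed

lemma Tchain_tau_comb:
  assumes "symmetric_fn n f" "1 \<le> j" "j \<le> n"
  shows "agree_off_diag n (Tchain n q t f j) (tau_comb n q f (chain_coeff n t j))"
  using assms(3,2)
proof (induction j rule: inc_induct)
  case base
  have "chain_coeff n t n k y * tauop q k f y = (if k = n then tauop q k f y else 0)" for k y
    by (simp add: chain_coeff_def Acoef_def)
  then have "tau_comb n q f (chain_coeff n t n) y = tauop q n f y" for y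
    using base by (simp add: tau_comb_def sum.delta)
  then show ?case
    by (simp add: agree_off_diag_def)
next
  case (step j)
  have "agree_off_diag n (Tchain n q t f j) (Top t j (tau_comb n q f (chain_coeff n t (Suc j))))"
    using step by (simp add: Tchain_step Top_agree_off_diag)
  also have "Top t j (tau_comb n q f (chain_coeff n t (Suc j)))
      = tau_comb n q f (Top_coeff t j (chain_coeff n t (Suc j)))"
    using step by (simp add: Top_tau_comb assms(1))
  also have "agree_off_diag n \<dots> (tau_comb n q f (chain_coeff n t j))"
    unfolding agree_off_diag_def tau_comb_def
    using step.hyps step.prems by (auto intro!: sum.cong simp: Top_coeff_chain_coeff)
  finally show ?case .
qed

definition Dop_coeff :: "nat \<Rightarrow> 'a::field \<Rightarrow> nat \<Rightarrow> nat \<Rightarrow> (nat \<Rightarrow> 'a) \<Rightarrow> 'a" where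
  "Dop_coeff n t i k y =
    (if k = i then Acoef n t i (Suc i) y
     else if i < k \<and> k \<le> n then (t - 1) * y i / (y k - y i) * Acoef n t k (Suc i) y
     else 0)"

lemma sum_chain_coeff:
  assumes "1 \<le> a" "a \<le> k" "k \<le> n" "inj_on y {1..n}"
  shows "(\<Sum>j = a..n. chain_coeff n t j k y) = Acoef n t k a y"
  using assms(2,1)
proof (induction a rule: inc_induct)
  case base
  have "(\<Sum>j = Suc k..n. chain_coeff n t j k y) = 0"
    by (intro sum.neutral) (auto simp: chain_coeff_def)
  then show ?case
    using assms(3) by (simp add: sum.atLeast_Suc_atMost chain_coeff_def Acoef_self)
next
  case (step a)
  have "y k \<noteq> y a"
    using assms(3,4) step by (auto dest: inj_onD)
  then have "chain_coeff n t a k y + Acoef n t k (Suc a) y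
      = (t * y k - y a) / (y k - y a) * Acoef n t k (Suc a) y"
    using step assms(3) by (simp add: chain_coeff_def field_simps)
  then show ?case
    using step assms(3) by (simp add: sum.atLeast_Suc_atMost Acoef_insert)
qed

lemma chain_coeff_Dop_coeff:
  assumes "1 \<le> i" "inj_on y {1..n}" "k \<in> {1..n}"
  shows "chain_coeff n t i k y + (1 - t) * (\<Sum>j = Suc i..n. chain_coeff n t j k y) = Dop_coeff n t i k y"
proof (cases "i < k")
  case True
  have "y k \<noteq> y i"
    using assms True by (auto dest: inj_onD)
  moreover have "(\<Sum>j = Suc i..n. chain_coeff n t j k y) = Acoef n t k (Suc i) y"
    using assms True by (intro sum_chain_coeff) auto
  ultimately show ?thesis
    using True assms(3) by (simp add: chain_coeff_def Dop_coeff_def field_simps)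
next
  case False
  then have "(\<Sum>j = Suc i..n. chain_coeff n t j k y) = 0"
    by (intro sum.neutral) (auto simp: chain_coeff_def)
  then show ?thesis
    using False by (simp add: chain_coeff_def Dop_coeff_def)
qed

lemma Tchain_Dop_coeff:
  assumes "symmetric_fn n f" "1 \<le> i" "i \<le> n" "inj_on y {1..n}"
  shows "Tchain n q t f i y + (1 - t) * (\<Sum>j = Suc i..n. Tchain n q t f j y)
       = (\<Sum>k\<in>{1..n}. Dop_coeff n t i k y * tauop q k f y)"
proof -
  have Tchain_eq: "Tchain n q t f j y = (\<Sum>k\<in>{1..n}. chain_coeff n t j k y * tauop q k f y)"
    if "j \<in> {i..n}" for j
    using Tchain_tau_comb[OF assms(1), of j q t] that assms(2,4)
    by (simp add: agree_off_diag_def tau_comb_def)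
  have "Tchain n q t f i y + (1 - t) * (\<Sum>j = Suc i..n. Tchain n q t f j y)
      = (\<Sum>k\<in>{1..n}. (chain_coeff n t i k y
           + (1 - t) * (\<Sum>j = Suc i..n. chain_coeff n t j k y)) * tauop q k f y)"
    using assms(3)
    by (simp add: Tchain_eq sum.swap[of _ "{Suc i..n}"] sum_distrib_left sum_distrib_right
        sum.distrib algebra_simps)
  also have "\<dots> = (\<Sum>k\<in>{1..n}. Dop_coeff n t i k y * tauop q k f y)"
    using assms(2,4) by (intro sum.cong) (simp_all add: chain_coeff_Dop_coeff)
  finally show ?thesis .
qed

lemma sum_Dop_coeff:
  assumes "1 \<le> i" "i \<le> n" "inj_on y {1..n}"
  shows "(\<Sum>k\<in>{1..n}. Dop_coeff n t i k y) = 1"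
proof -
  have Tchain_one: "Tchain n 1 t (\<lambda>_. 1) j = (\<lambda>_. t ^ (n - j))" for j
    using compose_Top_const[of t "[j..<n]" 1] by (simp add: Tchain_def tauop_def)
  have "(\<Sum>j = Suc i..n. t ^ (n - j)) = (\<Sum>k<n - i. t ^ k)"
    by (rule sum.reindex_bij_witness[where i = "\<lambda>k. n - k" and j = "\<lambda>j. n - j"]) auto
  then have "t ^ (n - i) + (1 - t) * (\<Sum>j = Suc i..n. t ^ (n - j)) = 1"
    by (simp flip: one_diff_power_eq)
  moreover have "symmetric_fn n (\<lambda>_. 1 :: 'a)"
    by (simp add: symmetric_fn_def)
  ultimately show ?thesis
    using Tchain_Dop_coeff[of n "\<lambda>_. 1" i y 1 t] assms by (simp add: Tchain_one tauop_def)
qed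

lemma Dop_expansion:
  assumes "symmetric_fn n f" "t \<noteq> 0" "1 \<le> i" "i \<le> n" "inj_on y {1..n}"
  shows "Dop n q t i f y = (\<Sum>k\<in>{1..n}. inverse (y i) * Dop_coeff n t i k y * (f y - tauop q k f y))"
proof -
  let ?E = "\<lambda>k. Dop_coeff n t i k y"
  have "Dop n q t i f y = inverse (y i) * (f y - (\<Sum>k\<in>{1..n}. ?E k * tauop q k f y))"
    using assms by (simp add: Dop_Tchain Tchain_Dop_coeff)
  also have "f y = (\<Sum>k\<in>{1..n}. ?E k * f y)"
    using sum_Dop_coeff[OF assms(3-5), of t] by (simp flip: sum_distrib_right)
  also have "inverse (y i) * ((\<Sum>k\<in>{1..n}. ?E k * f y) - (\<Sum>k\<in>{1..n}. ?E k * tauop q k f y))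
      = (\<Sum>k\<in>{1..n}. inverse (y i) * ?E k * (f y - tauop q k f y))"
    by (simp add: sum_distrib_left algebra_simps flip: sum_subtractf)
  finally show ?thesis .
qed

lemma sum_inverse_Dop_coeff:
  assumes "1 \<le> m" "m \<le> k" "k \<le> n" "inj_on y {1..n}" "\<forall>i\<in>{1..n}. y i \<noteq> 0"
  shows "(\<Sum>i = m..n. inverse (y i) * Dop_coeff n t i k y) = inverse (y k) * Acoef n t k m y"
  using assms(2,1)
proof (induction m rule: inc_induct)
  case base
  have "(\<Sum>i = Suc k..n. inverse (y i) * Dop_coeff n t i k y) = 0"
    by (intro sum.neutral) (auto simp: Dop_coeff_def)
  then show ?case
    using assms(3) by (simp add: sum.atLeast_Suc_atMost Dop_coeff_def Acoef_self)
next
  case (step m)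
  have "y m \<noteq> 0" "y k \<noteq> 0" "y k \<noteq> y m"
    using assms(3-5) step by (auto dest: inj_onD)
  then have "inverse (y m) * Dop_coeff n t m k y + inverse (y k) * Acoef n t k (Suc m) y
      = inverse (y k) * ((t * y k - y m) / (y k - y m) * Acoef n t k (Suc m) y)"
    using step assms(3) by (simp add: Dop_coeff_def field_simps)
  then show ?case
    using step assms(3) by (simp add: sum.atLeast_Suc_atMost Acoef_insert)
qed

lemma generic_point_inj_on:
  assumes "generic_point n q x"
  shows "inj_on x {1..n}"
  using assms unfolding generic_point_def inj_on_def by (metis mult_1 power_int_0_right)

theorem lemma5p3:
  fixes q t :: "'a::field_char_0" and n m :: nat and f :: "'a fn" and x :: "nat \<Rightarrow> 'a"
  assumes "q \<noteq> 0" and "t \<noteq> 0"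
    and "1 \<le> m" and "m \<le> n"
    and "laurent_poly n f" and "symmetric_fn n f"
    and "generic_point n q x"
  shows "(\<Sum>i = m..n. Dop n q t i f x)
       = (\<Sum>i = m..n. Acoef n t i m x * inverse (x i) * (f x - tauop q i f x))"
proof -
  have inj: "inj_on x {1..n}"
    using assms(7) by (rule generic_point_inj_on)
  have nonzero: "\<forall>i\<in>{1..n}. x i \<noteq> 0"
    using assms(7) by (simp add: generic_point_def)
  let ?G = "\<lambda>k. f x - tauop q k f x"
  have "(\<Sum>i = m..n. Dop n q t i f x)
      = (\<Sum>i = m..n. \<Sum>k\<in>{1..n}. inverse (x i) * Dop_coeff n t i k x * ?G k)"
    using assms(2,3,6) inj by (intro sum.cong) (simp_all add: Dop_expansion)
  also have "\<dots> = (\<Sum>k\<in>{1..n}. (\<Sum>i = m..n. inverse (x i) * Dop_coeff n t i k x) * ?G k)"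
    by (simp add: sum.swap[of _ "{m..n}"] sum_distrib_right)
  also have "\<dots> = (\<Sum>k = m..n. inverse (x k) * Acoef n t k m x * ?G k)"
  proof (rule sum.mono_neutral_cong_right)
    show "\<forall>k\<in>{1..n} - {m..n}. (\<Sum>i = m..n. inverse (x i) * Dop_coeff n t i k x) * ?G k = 0"
      by (auto simp: Dop_coeff_def)
    show "(\<Sum>i = m..n. inverse (x i) * Dop_coeff n t i k x) * ?G k
        = inverse (x k) * Acoef n t k m x * ?G k" if "k \<in> {m..n}" for k
      using that assms(3) inj nonzero by (simp add: sum_inverse_Dop_coeff)
  qed (use assms(3) in auto)
  finally show ?thesis
    by (simp add: ac_simps)
qed

end
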